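(* Let $d$ be a probability distribution on a state space $X$, let $\phi = (\phi_1,\dots,\phi_n)^T : X \to \mathbb{R}^n$ be a fixed feature map and $V : X \to \mathbb{R}$ a fixed target function (the value-iteration target $V(x) = c(x,\pi(x)) + \gamma\,\mathbb{E}[V^{\mathrm{current}}(x_+)\mid x, a=\pi(x)]$), with $\mathbb{E}_d\|\phi(x)\|^2<\infty$ and $\mathbb{E}_d V(x)^2<\infty$, and define $$J(w) = \mathbb{E}_{x\sim d}\Big[\big(V(x) - w^T\phi(x)\big)^2\Big], \qquad w\in\mathbb{R}^n .$$ Let $\Phi := \mathbb{E}_d[\phi(x)\phi(x)^T]$ and assume: (i) $\Phi$ is positive definite (so $J$ has a unique minimizer $w^*$); (ii) the step size $\epsilon>0$ satisfies $|1-2\epsilon\lambda_i(\Phi)|<1$ for every eigenvalue $\lambda_i(\Phi)$ of $\Phi$; (iii) the parameter $\rho\in(0,1)$ satisfies $\rho \ge \max_i (1-2\epsilon\lambda_i(\Phi))^2$. Fix $\lambda>0$, an integer $N\ge 1$ and an initial vector $w_0\in\mathbb{R}^n$. For $k=0,\dots,N-1$, two agents $i=1,2$ produce random vectors $g_k^1, g_k^2$ (stochastic gradients) which, conditionally on the past (in particular on $w_k$), are independent and identically distributed with mean $\nabla J(w_k)$ and covariance $G$ (a fixed matrix, the same for all $k$). Each agent decides $$\alpha_k^i = \begin{cases} 1 & \text{if } J(w_k - \epsilon g_k^i) - J(w_k) \le -\dfrac{\lambda}{\rho^{N-1-k}N},\\ 0 & \text{otherwise,}\end{cases}$$ and the iterate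 is updated as $w_{k+1} = w_k - \epsilon g_k^1$ if $(\alpha_k^1,\alpha_k^2)=(1,0)$, $w_{k+1}=w_k-\epsilon g_k^2$ if $(\alpha_k^1,\alpha_k^2)=(0,1)$, $w_{k+1} = w_k - \tfrac{\epsilon}{2}(g_k^1+g_k^2)$ if $(\alpha_k^1,\alpha_k^2)=(1,1)$, and $w_{k+1}=w_k$ if $(\alpha_k^1,\alpha_k^2)=(0,0)$. Then $$\mathbb{E}\left[\lambda\sum_{k=0}^{N-1}\frac{\alpha_k^1+\alpha_k^2}{2N} + J(w_N)\right] \le \lambda + J(w^* ) + \rho^N\big[J(w_0)-J(w^* )\big] + \frac{1-\rho^N}{1-\rho}\,\epsilon^2\,\mathrm{Tr}(\Phi G),$$ where the expectation is over all the randomness (the data generating the stochastic gradients) up to iteration $N$.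
   Context: This models communication-efficient distributed linear value function approximation: a server holds weights $w_k$, each agent computes a local stochastic gradient $g_k^i$ of $J$ at $w_k$ from locally collected state-transition data, and transmits it only when the resulting decrease of $J$ is large enough; $\alpha_k^i\in\{0,1\}$ indicates whether agent $i$ transmits at iteration $k$. $\lambda_i(\Phi)$ denotes the eigenvalues of the symmetric matrix $\Phi$, and $\mathrm{Tr}$ is the trace. *)

theory Defs
  imports "HOL-Analysis.Analysis" "HOL-Probability.Probability"
begin

definition Jobj :: "'x measure \<Rightarrow> ('x \<Rightarrow> real) \<Rightarrow> ('x \<Rightarrow> real^'n) \<Rightarrow> real^'n \<Rightarrow> real" where
  "Jobj d V phi w = (\<integral>x. (V x - w \<bullet> phi x)^2 \<partial>d)"

definition grad :: "(real^'n \<Rightarrow> real) \<Rightarrow> real^'n \<Rightarrow> real^'n" where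
  "grad f w = (THE v. (f has_derivative (\<lambda>h. v \<bullet> h)) (at w))"

definition Phi_mat :: "'x measure \<Rightarrow> ('x \<Rightarrow> real^'n) \<Rightarrow> real^'n^'n" where
  "Phi_mat d phi = (\<chi> i j. \<integral>x. phi x $ i * phi x $ j \<partial>d)"

definition pos_def :: "real^'n^'n \<Rightarrow> bool" where
  "pos_def A \<longleftrightarrow> (\<forall>v. v \<noteq> 0 \<longrightarrow> v \<bullet> (A *v v) > 0)"

definition is_eigenvalue :: "real^'n^'n \<Rightarrow> real \<Rightarrow> bool" where
  "is_eigenvalue A l \<longleftrightarrow> (\<exists>v. v \<noteq> 0 \<and> A *v v = l *\<^sub>R v)"

definition alpha :: "(real^'n \<Rightarrow> real) \<Rightarrow> real \<Rightarrow> real \<Rightarrow> real \<Rightarrow> nat \<Rightarrow> nat \<Rightarrow> real^'n \<Rightarrow> real^'n \<Rightarrow> real" where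
  "alpha J eps lam rho N k w g =
     (if J (w - eps *\<^sub>R g) - J w \<le> - (lam / (rho ^ (N - 1 - k) * real N)) then 1 else 0)"

definition upd :: "real \<Rightarrow> real \<Rightarrow> real \<Rightarrow> real^'n \<Rightarrow> real^'n \<Rightarrow> real^'n \<Rightarrow> real^'n" where
  "upd eps a1 a2 w g1 g2 =
     (if a1 = 1 \<and> a2 = 0 then w - eps *\<^sub>R g1
      else if a1 = 0 \<and> a2 = 1 then w - eps *\<^sub>R g2
      else if a1 = 1 \<and> a2 = 1 then w - (eps / 2) *\<^sub>R (g1 + g2)
      else w)"

fun traj :: "(real^'n \<Rightarrow> real) \<Rightarrow> real \<Rightarrow> real \<Rightarrow> real \<Rightarrow> nat \<Rightarrow> real^'n
    \<Rightarrow> (nat \<Rightarrow> real^'n) \<Rightarrow> (nat \<Rightarrow> real^'n) \<Rightarrow> nat \<Rightarrow> real^'n" where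
  "traj J eps lam rho N w0 g1 g2 0 = w0"
| "traj J eps lam rho N w0 g1 g2 (Suc k) =
     (let w = traj J eps lam rho N w0 g1 g2 k in
      upd eps (alpha J eps lam rho N k w (g1 k)) (alpha J eps lam rho N k w (g2 k)) w (g1 k) (g2 k))"

end

theory Submission
  imports Defs
begin

text \<open>Because Phi is positive definite and w* minimises J, J(w) = J(w*) + (w - w*)' Phi (w - w*) and
  grad J(w) = 2 Phi (w - w*). A plain stochastic step w - eps g, with g conditionally unbiased of
  covariance G, therefore satisfies E J(w - eps g) - J(w*) <= rho (J(w) - J(w*)) + eps^2 tr(Phi G):
  the mean step applies I - 2 eps Phi, which shrinks the squared Phi-norm by the factor
  max_i (1 - 2 eps lambda_i)^2 <= rho, and the noise adds eps^2 tr(Phi G).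
  Pathwise, the event-triggered update satisfies
    J(w_{k+1}) + T_k (alpha_k^1 + alpha_k^2) / 2 <= (J(w_k - eps g_k^1) + J(w_k - eps g_k^2)) / 2 + T_k
  for the threshold T_k = lam / (rho^(N-1-k) N): if both agents transmit this is midpoint convexity
  of J, otherwise the trigger condition pays for the decrease that was not taken. Weighting step k
  by rho^(N-1-k) and telescoping gives the bound.\<close>

section \<open>Quadratic forms of symmetric matrices\<close>

definition quad_form :: "real^'n^'n \<Rightarrow> real^'n \<Rightarrow> real" where
  "quad_form P x = x \<bullet> (P *v x)"

lemma inner_matrix_vector_symmetric:
  fixes P :: "real^'n^'n"
  assumes "transpose P = P"
  shows "x \<bullet> (P *v y) = (P *v x) \<bullet> y"
  by (metis assms dot_lmul_matrix inner_commute transpose_matrix_vector)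

lemma quad_form_add:
  assumes "transpose P = P"
  shows "quad_form P (x + y) = quad_form P x + 2 * (x \<bullet> (P *v y)) + quad_form P y"
  using inner_matrix_vector_symmetric[OF assms, of y x]
  by (simp add: quad_form_def matrix_vector_right_distrib inner_add_left inner_add_right inner_commute)

lemma quad_form_scaleR: "quad_form P (c *\<^sub>R x) = c\<^sup>2 * quad_form P x"
  by (simp add: quad_form_def matrix_vector_mult_scaleR power2_eq_square)

lemma quad_form_eq_sum: "quad_form P x = (\<Sum>i\<in>UNIV. \<Sum>j\<in>UNIV. P$i$j * (x$i * x$j))"
  by (simp add: quad_form_def inner_vec_def matrix_vector_mult_def sum_distrib_left mult_ac)

lemma quad_form_midpoint_le:
  assumes "transpose P = P" and "\<And>x. 0 \<le> quad_form P x"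
  shows "quad_form P ((1/2) *\<^sub>R (x + y)) \<le> (quad_form P x + quad_form P y) / 2"
proof -
  have "quad_form P (x - y) = quad_form P x - 2 * (x \<bullet> (P *v y)) + quad_form P y"
    using assms(1)
    by (simp add: quad_form_def matrix_vector_mult_diff_distrib inner_diff_left inner_diff_right
        inner_matrix_vector_symmetric[of P y x] inner_commute)
  moreover have "quad_form P ((1/2) *\<^sub>R (x + y)) = (quad_form P x + 2 * (x \<bullet> (P *v y)) + quad_form P y) / 4"
    by (simp add: quad_form_scaleR quad_form_add[OF assms(1)] power2_eq_square)
  ultimately show ?thesis
    using assms(2)[of "x - y"] by simp
qed

lemma linear_coeff_eq_0_if_quadratic_nonpos:
  fixes a b :: real
  assumes "\<And>t. a * t + b * t\<^sup>2 \<le> 0"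
  shows "a = 0"
proof (rule ccontr)
  assume "a \<noteq> 0"
  define c where "c = 2 * (\<bar>b\<bar> + 1)"
  have c: "c > 0" "\<bar>b\<bar> \<le> c / 2" unfolding c_def by simp_all
  have "a * (a / c) + b * (a / c)\<^sup>2 = a\<^sup>2 / c * (1 + b / c)"
    using c by (simp add: field_simps power2_eq_square)
  moreover have "1 + b / c > 0"
    using c by (simp add: field_simps abs_le_iff)
  ultimately have "a * (a / c) + b * (a / c)\<^sup>2 > 0"
    using c \<open>a \<noteq> 0\<close> by simp
  with assms show False by (meson not_le)
qed

lemma self_adjoint_max_eigenvector:
  fixes f :: "'a::euclidean_space \<Rightarrow> 'a"
  assumes lin: "linear f" and adj: "\<And>x y. x \<bullet> f y = f x \<bullet> y"
    and S: "subspace S" and inv: "\<And>x. x \<in> S \<Longrightarrow> f x \<in> S"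
    and "v0 \<in> S" "v0 \<noteq> 0"
  obtains u m where "u \<in> S" "u \<noteq> 0" "f u = m *\<^sub>R u" "\<And>v. v \<in> S \<Longrightarrow> v \<bullet> f v \<le> m * (v \<bullet> v)"
proof -
  define K where "K = S \<inter> sphere 0 1"
  have "compact K"
    unfolding K_def by (simp add: S closed_Int_compact closed_subspace)
  moreover have "v0 /\<^sub>R norm v0 \<in> K"
    unfolding K_def using assms(5,6) S by (simp add: subspace_scale)
  moreover have "continuous_on K (\<lambda>x. x \<bullet> f x)"
    using lin by (intro continuous_intros linear_continuous_on) (simp add: linear_conv_bounded_linear)
  ultimately obtain u where "u \<in> K" and umax: "\<And>y. y \<in> K \<Longrightarrow> y \<bullet> f y \<le> u \<bullet> f u"
    using continuous_attains_sup[of K "\<lambda>x. x \<bullet> f x"] by blast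
  define m where "m = u \<bullet> f u"
  have uS: "u \<in> S" and uu: "u \<bullet> u = 1"
    using \<open>u \<in> K\<close> unfolding K_def by (auto simp: norm_eq_1)
  have bound: "v \<bullet> f v \<le> m * (v \<bullet> v)" if "v \<in> S" for v
  proof (cases "v = 0")
    case True then show ?thesis by (simp add: linear_0[OF lin])
  next
    case False
    then have "v /\<^sub>R norm v \<in> K"
      unfolding K_def using that S by (simp add: subspace_scale)
    then have "(v \<bullet> f v) / (norm v)\<^sup>2 \<le> m"
      using umax[of "v /\<^sub>R norm v"] unfolding m_def
      by (simp add: linear_scale[OF lin] power2_eq_square divide_inverse mult_ac)
    with False show ?thesis by (simp add: divide_le_eq power2_norm_eq_inner)
  qed
  have "h \<bullet> (f u - m *\<^sub>R u) = 0" if "h \<in> S" for h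
  proof -
    have "(2 * (h \<bullet> (f u - m *\<^sub>R u))) * t + (h \<bullet> f h - m * (h \<bullet> h)) * t\<^sup>2 \<le> 0" for t
    proof -
      have "u + t *\<^sub>R h \<in> S" using uS that S by (simp add: subspace_add subspace_scale)
      from bound[OF this] show ?thesis
        using adj[of u h] uu
        by (simp add: linear_add[OF lin] linear_scale[OF lin] inner_add_left inner_add_right
            inner_diff_right m_def power2_eq_square algebra_simps inner_commute)
    qed
    then show ?thesis using linear_coeff_eq_0_if_quadratic_nonpos by fastforce
  qed
  moreover have "f u - m *\<^sub>R u \<in> S"
    using uS inv S by (simp add: subspace_diff subspace_scale)
  ultimately have "f u = m *\<^sub>R u" by (metis eq_iff_diff_eq_0 inner_eq_zero_iff)
  moreover have "u \<noteq> 0" using uu by auto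
  ultimately show ?thesis using that uS bound by blast
qed

lemma commuting_self_adjoint_eigenvector:
  fixes f g :: "'a::euclidean_space \<Rightarrow> 'a"
  assumes lin_f: "linear f" and adj_f: "\<And>x y. x \<bullet> f y = f x \<bullet> y"
    and lin_g: "linear g" and adj_g: "\<And>x y. x \<bullet> g y = g x \<bullet> y"
    and comm: "\<And>x. f (g x) = g (f x)"
  obtains v m l where "v \<noteq> 0" "f v = m *\<^sub>R v" "g v = l *\<^sub>R v" "\<And>x. x \<bullet> f x \<le> m * (x \<bullet> x)"
proof -
  obtain b :: 'a where "b \<in> Basis" "b \<noteq> 0"
    using nonempty_Basis Basis_zero by blast
  then obtain u m where u: "u \<noteq> 0" "f u = m *\<^sub>R u" and f_max: "\<And>x. x \<bullet> f x \<le> m * (x \<bullet> x)"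
    using self_adjoint_max_eigenvector[OF lin_f adj_f subspace_UNIV, of b] by auto
  define E where "E = {v. f v = m *\<^sub>R v}"
  have E: "subspace E"
    unfolding E_def subspace_def
    by (simp add: linear_0[OF lin_f] linear_add[OF lin_f] linear_scale[OF lin_f] scaleR_add_right)
  have E_invariant: "g x \<in> E" if "x \<in> E" for x
    using that unfolding E_def by (simp add: comm linear_scale[OF lin_g])
  have "u \<in> E" using u unfolding E_def by simp
  then obtain v l where "v \<in> E" "v \<noteq> 0" "g v = l *\<^sub>R v"
    using self_adjoint_max_eigenvector[OF lin_g adj_g E E_invariant _ u(1)] by blast
  then show ?thesis
    using that f_max unfolding E_def by blast
qed

text \<open>The operator \<open>C = A P A - rho P\<close> with \<open>A = I - 2 eps P\<close> commutes with \<open>P\<close>, so its top eigenspace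
  contains an eigenvector of \<open>P\<close>; on it \<open>C\<close> acts as \<open>l ((1 - 2 eps l)\<^sup>2 - rho) \<le> 0\<close>.\<close>
lemma quad_form_gradient_step_le:
  fixes P :: "real^'n^'n"
  assumes sym: "transpose P = P" and psd: "\<And>x. 0 \<le> quad_form P x"
    and eig: "\<forall>l. is_eigenvalue P l \<longrightarrow> (1 - 2 * eps * l)\<^sup>2 \<le> rho"
  shows "quad_form P (x - (2 * eps) *\<^sub>R (P *v x)) \<le> rho * quad_form P x"
proof -
  define A where "A x = x - (2 * eps) *\<^sub>R (P *v x)" for x
  define C where "C x = A (P *v A x) - rho *\<^sub>R (P *v x)" for x
  have adjP: "\<And>x y. x \<bullet> (P *v y) = (P *v x) \<bullet> y"
    by (rule inner_matrix_vector_symmetric[OF sym])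
  have linA: "linear A"
    unfolding A_def
    by (rule linearI) (simp_all add: matrix_vector_right_distrib matrix_vector_mult_scaleR algebra_simps)
  have adjA: "\<And>x y. x \<bullet> A y = A x \<bullet> y"
    unfolding A_def using adjP by (simp add: inner_diff_left inner_diff_right)
  have linC: "linear C"
    unfolding C_def
    by (rule linearI) (simp_all add: linear_add[OF linA] linear_scale[OF linA] matrix_vector_right_distrib
        matrix_vector_mult_scaleR algebra_simps)
  have adjC: "\<And>x y. x \<bullet> C y = C x \<bullet> y"
    unfolding C_def by (simp add: inner_diff_left inner_diff_right adjA adjP)
  have AP: "A (P *v x) = P *v A x" for x
    unfolding A_def by (simp add: matrix_vector_mult_diff_distrib matrix_vector_mult_scaleR)
  have CP: "C (P *v x) = P *v C x" for x
    unfolding C_def by (simp add: AP matrix_vector_mult_diff_distrib matrix_vector_mult_scaleR)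
  obtain v mu l where v: "v \<noteq> 0" "C v = mu *\<^sub>R v" "P *v v = l *\<^sub>R v"
    and C_max: "\<And>x. x \<bullet> C x \<le> mu * (x \<bullet> x)"
    using commuting_self_adjoint_eigenvector[OF linC adjC matrix_vector_mul_linear adjP CP] by blast
  have "0 \<le> l * (v \<bullet> v)"
    using psd[of v] v(3) by (simp add: quad_form_def)
  then have "0 \<le> l"
    using v(1) by (metis inner_gt_zero_iff not_le zero_le_mult_iff)
  have "(1 - 2 * eps * l)\<^sup>2 \<le> rho"
    using eig v(1,3) unfolding is_eigenvalue_def by blast
  have "A v = (1 - 2 * eps * l) *\<^sub>R v"
    unfolding A_def by (simp add: v(3) scaleR_diff_left)
  then have "C v = ((1 - 2 * eps * l) * l * (1 - 2 * eps * l) - rho * l) *\<^sub>R v"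
    unfolding C_def by (simp add: v(3) matrix_vector_mult_scaleR linear_scale[OF linA] scaleR_diff_left[of _ "rho * l"])
  then have "mu = (1 - 2 * eps * l) * l * (1 - 2 * eps * l) - rho * l"
    using v(1,2) by (metis scaleR_cancel_right)
  also have "\<dots> = l * ((1 - 2 * eps * l)\<^sup>2 - rho)"
    by (simp add: power2_eq_square algebra_simps)
  also have "\<dots> \<le> 0"
    using \<open>0 \<le> l\<close> \<open>(1 - 2 * eps * l)\<^sup>2 \<le> rho\<close> by (simp add: mult_nonneg_nonpos)
  finally have "x \<bullet> C x \<le> 0"
    using C_max[of x] by (meson inner_ge_zero mult_nonpos_nonneg order_trans)
  moreover have "x \<bullet> C x = quad_form P (A x) - rho * quad_form P x"
    unfolding C_def quad_form_def by (simp add: inner_diff_right adjA)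
  ultimately show ?thesis
    unfolding A_def by simp
qed

section \<open>Quadratic objectives\<close>

lemma grad_eqI:
  assumes "(f has_derivative (\<lambda>h. v \<bullet> h)) (at w)"
  shows "grad f w = v"
  unfolding grad_def
proof (rule the_equality)
  show "(f has_derivative (\<lambda>h. v \<bullet> h)) (at w)" by (rule assms)
next
  fix u assume "(f has_derivative (\<lambda>h. u \<bullet> h)) (at w)"
  from has_derivative_unique[OF this assms] have "(u - v) \<bullet> (u - v) = 0"
    by (metis inner_diff_left right_minus_eq)
  then show "u = v" by simp
qed

lemma quadratic_has_derivative:
  fixes P :: "real^'n^'n"
  assumes "transpose P = P"
  shows "((\<lambda>v. c - 2 * (b \<bullet> v) + quad_form P v) has_derivative (\<lambda>h. (2 *\<^sub>R (P *v w - b)) \<bullet> h)) (at w)"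
proof -
  have "((*v) P has_derivative (*v) P) (at w)"
    by (rule bounded_linear_imp_has_derivative[OF matrix_vector_mul_bounded_linear])
  then show ?thesis
    unfolding quad_form_def
    by (auto intro!: derivative_eq_intros
        simp: inner_matrix_vector_symmetric[OF assms, of w] inner_diff_right inner_commute right_diff_distrib)
qed

lemma quadratic_eq_min_plus_quad_form:
  fixes P :: "real^'n^'n"
  assumes sym: "transpose P = P" and J: "\<And>v. J v = c - 2 * (b \<bullet> v) + quad_form P v"
    and min: "\<And>v. J ws \<le> J v"
  shows "J v = J ws + quad_form P (v - ws)"
proof -
  have "J = (\<lambda>v. c - 2 * (b \<bullet> v) + quad_form P v)"
    using J by blast
  then have "(J has_derivative (\<lambda>h. (2 *\<^sub>R (P *v ws - b)) \<bullet> h)) (at ws)"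
    using quadratic_has_derivative[OF sym] by simp
  then have "(\<lambda>h. (2 *\<^sub>R (P *v ws - b)) \<bullet> h) = (\<lambda>h. 0)"
    by (rule has_derivative_local_min) (simp add: min)
  then have "(2 *\<^sub>R (P *v ws - b)) \<bullet> (2 *\<^sub>R (P *v ws - b)) = 0"
    by meson
  then have "b = P *v ws" by simp
  then show ?thesis
    using inner_matrix_vector_symmetric[OF sym, of ws v]
    by (simp add: J quad_form_def matrix_vector_mult_diff_distrib inner_diff_left inner_diff_right
        inner_commute)
qed

lemma grad_min_plus_quad_form:
  fixes P :: "real^'n^'n"
  assumes sym: "transpose P = P" and J: "\<And>v. J v = J ws + quad_form P (v - ws)"
  shows "grad J w = 2 *\<^sub>R (P *v (w - ws))"
proof (rule grad_eqI)
  define c where "c = J ws + quad_form P ws"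
  have "J v = c - 2 * ((P *v ws) \<bullet> v) + quad_form P v" for v
    unfolding J[of v] c_def using inner_matrix_vector_symmetric[OF sym, of ws v]
    by (simp add: quad_form_def matrix_vector_mult_diff_distrib inner_diff_left inner_diff_right
        inner_commute)
  then have "J = (\<lambda>v. c - 2 * ((P *v ws) \<bullet> v) + quad_form P v)" by blast
  then show "(J has_derivative (\<lambda>h. (2 *\<^sub>R (P *v (w - ws))) \<bullet> h)) (at w)"
    using quadratic_has_derivative[OF sym, of c "P *v ws" w]
    by (simp add: matrix_vector_mult_diff_distrib)
qed

section \<open>Square-integrable random variables\<close>

definition square_integrable :: "'a measure \<Rightarrow> ('a \<Rightarrow> real) \<Rightarrow> bool" where
  "square_integrable M f \<longleftrightarrow> f \<in> borel_measurable M \<and> integrable M (\<lambda>x. (f x)\<^sup>2)"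

lemma square_integrable_borel_measurable:
  "square_integrable M f \<Longrightarrow> f \<in> borel_measurable M"
  by (simp add: square_integrable_def)

lemma integrable_mult_square_integrable:
  assumes "square_integrable M f" "square_integrable M g"
  shows "integrable M (\<lambda>x. f x * g x)"
proof (rule Bochner_Integration.integrable_bound)
  show "integrable M (\<lambda>x. (f x)\<^sup>2 + (g x)\<^sup>2)"
    using assms by (simp add: square_integrable_def)
  show "(\<lambda>x. f x * g x) \<in> borel_measurable M"
    using assms by (simp add: square_integrable_def borel_measurable_times)
  show "AE x in M. norm (f x * g x) \<le> norm ((f x)\<^sup>2 + (g x)\<^sup>2)"
  proof (intro AE_I2)
    fix x
    have "2 * (\<bar>f x\<bar> * \<bar>g x\<bar>) \<le> (f x)\<^sup>2 + (g x)\<^sup>2"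
      using sum_squares_bound[of "\<bar>f x\<bar>" "\<bar>g x\<bar>"] by (simp add: mult.assoc)
    moreover have "0 \<le> \<bar>f x\<bar> * \<bar>g x\<bar>" by simp
    ultimately have "\<bar>f x\<bar> * \<bar>g x\<bar> \<le> (f x)\<^sup>2 + (g x)\<^sup>2" by linarith
    then show "norm (f x * g x) \<le> norm ((f x)\<^sup>2 + (g x)\<^sup>2)"
      by (simp add: abs_mult)
  qed
qed

lemma square_integrable_bound:
  assumes "square_integrable M f" "g \<in> borel_measurable M" "\<And>x. \<bar>g x\<bar> \<le> \<bar>f x\<bar>"
  shows "square_integrable M g"
  unfolding square_integrable_def
proof
  show "integrable M (\<lambda>x. (g x)\<^sup>2)"
  proof (rule Bochner_Integration.integrable_bound)
    show "integrable M (\<lambda>x. (f x)\<^sup>2)" "(\<lambda>x. (g x)\<^sup>2) \<in> borel_measurable M"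
      using assms by (simp_all add: square_integrable_def)
    show "AE x in M. norm ((g x)\<^sup>2) \<le> norm ((f x)\<^sup>2)"
      using assms(3) by (intro AE_I2) (simp add: abs_le_square_iff)
  qed
qed (fact assms(2))

lemma square_integrable_add:
  assumes "square_integrable M f" "square_integrable M g"
  shows "square_integrable M (\<lambda>x. f x + g x)"
  unfolding square_integrable_def
proof
  have "integrable M (\<lambda>x. (f x)\<^sup>2 + (g x)\<^sup>2 + 2 * (f x * g x))"
    using assms integrable_mult_square_integrable[OF assms]
    by (simp add: square_integrable_def)
  then show "integrable M (\<lambda>x. (f x + g x)\<^sup>2)"
    by (simp add: power2_sum mult.assoc)
qed (use assms in \<open>simp add: square_integrable_def borel_measurable_add\<close>)

lemma square_integrable_cmult:
  "square_integrable M f \<Longrightarrow> square_integrable M (\<lambda>x. c * f x)"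
  by (simp add: square_integrable_def power_mult_distrib borel_measurable_times)

lemma square_integrable_diff:
  assumes "square_integrable M f" "square_integrable M g"
  shows "square_integrable M (\<lambda>x. f x - g x)"
  using square_integrable_add[OF assms(1) square_integrable_cmult[OF assms(2), of "-1"]] by simp

lemma square_integrable_abs:
  "square_integrable M f \<Longrightarrow> square_integrable M (\<lambda>x. \<bar>f x\<bar>)"
  by (simp add: square_integrable_def borel_measurable_abs)

lemma square_integrable_const:
  "finite_measure M \<Longrightarrow> square_integrable M (\<lambda>x. c)"
  by (simp add: square_integrable_def finite_measure.integrable_const)

lemma square_integrable_sum:
  assumes "\<And>i. i \<in> I \<Longrightarrow> square_integrable M (f i)"
  shows "square_integrable M (\<lambda>x. \<Sum>i\<in>I. f i x)"
  using assms
proof (induction I rule: infinite_finite_induct)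
  case (insert i I)
  then show ?case by (simp add: square_integrable_add)
qed (simp_all add: square_integrable_def)

lemma integrable_quad_form:
  assumes "\<And>j. square_integrable M (\<lambda>\<omega>. X \<omega> $ j)"
  shows "integrable M (\<lambda>\<omega>. quad_form P (X \<omega>))"
  using integrable_mult_square_integrable[OF assms assms] by (simp add: quad_form_eq_sum)

section \<open>The least-squares objective\<close>

lemma Jobj_eq_quadratic:
  fixes phi :: "'x \<Rightarrow> real^'n"
  assumes phi: "phi \<in> borel_measurable d" and V: "V \<in> borel_measurable d"
    and phi_L2: "integrable d (\<lambda>x. (norm (phi x))\<^sup>2)" and V_L2: "integrable d (\<lambda>x. (V x)\<^sup>2)"
  shows "Jobj d V phi v = (\<integral>x. (V x)\<^sup>2 \<partial>d) - 2 * ((\<chi> i. \<integral>x. V x * phi x $ i \<partial>d) \<bullet> v)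
           + quad_form (Phi_mat d phi) v"
proof -
  have V_sq: "square_integrable d V"
    using V V_L2 by (simp add: square_integrable_def)
  have phi_sq: "square_integrable d (\<lambda>x. phi x $ i)" for i
  proof (rule square_integrable_bound)
    show "square_integrable d (\<lambda>x. norm (phi x))"
      using phi phi_L2 by (simp add: square_integrable_def)
    show "(\<lambda>x. phi x $ i) \<in> borel_measurable d"
      using measurable_compose[OF phi borel_measurable_nth] by simp
  qed (simp add: component_le_norm_cart)
  have "(V x - v \<bullet> phi x)\<^sup>2 = (V x)\<^sup>2 - 2 * (V x * (v \<bullet> phi x)) + (v \<bullet> phi x)\<^sup>2" for x
    by (simp add: power2_diff mult.assoc)
  moreover have "V x * (v \<bullet> phi x) = (\<Sum>i\<in>UNIV. v$i * (V x * phi x $ i))" for x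
    by (simp add: inner_vec_def sum_distrib_left mult_ac)
  moreover have "(v \<bullet> phi x)\<^sup>2 = (\<Sum>i\<in>UNIV. \<Sum>j\<in>UNIV. (v$i * v$j) * (phi x $ i * phi x $ j))" for x
    by (simp add: inner_vec_def power2_eq_square sum_product mult_ac)
  ultimately have "(V x - v \<bullet> phi x)\<^sup>2 = (V x)\<^sup>2 - 2 * (\<Sum>i\<in>UNIV. v$i * (V x * phi x $ i))
      + (\<Sum>i\<in>UNIV. \<Sum>j\<in>UNIV. (v$i * v$j) * (phi x $ i * phi x $ j))" for x
    by (simp only:)
  then have "Jobj d V phi v = (\<integral>x. (V x)\<^sup>2 \<partial>d) - 2 * (\<Sum>i\<in>UNIV. v$i * (\<integral>x. V x * phi x $ i \<partial>d))
      + (\<Sum>i\<in>UNIV. \<Sum>j\<in>UNIV. (v$i * v$j) * (\<integral>x. phi x $ i * phi x $ j \<partial>d))"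
    using V_L2 integrable_mult_square_integrable[OF V_sq phi_sq]
      integrable_mult_square_integrable[OF phi_sq phi_sq]
    by (simp add: Jobj_def)
  then show ?thesis
    by (simp add: inner_vec_def quad_form_def matrix_vector_mult_def Phi_mat_def sum_distrib_left mult_ac)
qed

lemma Phi_mat_symmetric: "transpose (Phi_mat d phi) = Phi_mat d phi"
  by (simp add: transpose_def Phi_mat_def vec_eq_iff mult.commute)

lemma Jobj_nonneg: "0 \<le> Jobj d V phi w"
  by (simp add: Jobj_def)

section \<open>The event-triggered update\<close>

lemma upd_event_triggered_le:
  fixes J :: "real^'n \<Rightarrow> real"
  assumes conv: "\<And>u v. J ((1/2) *\<^sub>R (u + v)) \<le> (J u + J v) / 2" and "0 \<le> T"
    and a1: "a1 = (if J (w - eps *\<^sub>R g1) - J w \<le> - T then 1 else 0)"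
    and a2: "a2 = (if J (w - eps *\<^sub>R g2) - J w \<le> - T then 1 else 0)"
  shows "J (upd eps a1 a2 w g1 g2) + T * ((a1 + a2) / 2)
           \<le> (J (w - eps *\<^sub>R g1) + J (w - eps *\<^sub>R g2)) / 2 + T"
proof -
  have "(1/2) *\<^sub>R ((w - eps *\<^sub>R g1) + (w - eps *\<^sub>R g2)) = w - (eps / 2) *\<^sub>R (g1 + g2)"
    by (simp add: vec_eq_iff field_simps)
  then have mid: "J (w - (eps / 2) *\<^sub>R (g1 + g2)) \<le> (J (w - eps *\<^sub>R g1) + J (w - eps *\<^sub>R g2)) / 2"
    using conv by metis
  consider (both) "J (w - eps *\<^sub>R g1) - J w \<le> - T" "J (w - eps *\<^sub>R g2) - J w \<le> - T"
    | (first) "J (w - eps *\<^sub>R g1) - J w \<le> - T" "\<not> J (w - eps *\<^sub>R g2) - J w \<le> - T"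
    | (second) "\<not> J (w - eps *\<^sub>R g1) - J w \<le> - T" "J (w - eps *\<^sub>R g2) - J w \<le> - T"
    | (neither) "\<not> J (w - eps *\<^sub>R g1) - J w \<le> - T" "\<not> J (w - eps *\<^sub>R g2) - J w \<le> - T"
    by blast
  then show ?thesis
  proof cases
    case both
    then show ?thesis using mid by (simp add: upd_def a1 a2)
  next
    case first
    then show ?thesis using \<open>0 \<le> T\<close> by (simp add: upd_def a1 a2 field_simps)
  next
    case second
    then show ?thesis using \<open>0 \<le> T\<close> by (simp add: upd_def a1 a2 field_simps)
  next
    case neither
    then show ?thesis by (simp add: upd_def a1 a2 field_simps)
  qed
qed

lemma alpha_nonneg: "0 \<le> alpha J eps lam rho N k w g"
  by (simp add: alpha_def)

lemma abs_upd_component_le: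
  "\<bar>upd eps a1 a2 w g1 g2 $ i\<bar> \<le> \<bar>w $ i\<bar> + \<bar>eps\<bar> * (\<bar>g1 $ i\<bar> + \<bar>g2 $ i\<bar>)"
proof -
  have bound: "\<bar>w $ i - eps * y\<bar> \<le> \<bar>w $ i\<bar> + \<bar>eps\<bar> * (\<bar>g1 $ i\<bar> + \<bar>g2 $ i\<bar>)"
    if "\<bar>y\<bar> \<le> \<bar>g1 $ i\<bar> + \<bar>g2 $ i\<bar>" for y
  proof -
    have "\<bar>w $ i - eps * y\<bar> \<le> \<bar>w $ i\<bar> + \<bar>eps\<bar> * \<bar>y\<bar>"
      by (metis abs_mult abs_triangle_ineq4)
    also have "\<dots> \<le> \<bar>w $ i\<bar> + \<bar>eps\<bar> * (\<bar>g1 $ i\<bar> + \<bar>g2 $ i\<bar>)"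
      using that by (simp add: mult_left_mono)
    finally show ?thesis .
  qed
  have "upd eps a1 a2 w g1 g2 $ i \<in> (\<lambda>y. w $ i - eps * y) ` {g1 $ i, g2 $ i, (g1 $ i + g2 $ i) / 2, 0}"
    by (simp add: upd_def algebra_simps)
  then obtain y where "y \<in> {g1 $ i, g2 $ i, (g1 $ i + g2 $ i) / 2, 0}" "upd eps a1 a2 w g1 g2 $ i = w $ i - eps * y"
    by blast
  moreover have "\<bar>(g1 $ i + g2 $ i) / 2\<bar> \<le> \<bar>g1 $ i\<bar> + \<bar>g2 $ i\<bar>"
    using abs_triangle_ineq[of "g1 $ i" "g2 $ i"] by simp
  ultimately show ?thesis
    using bound[of y] by auto
qed

lemma borel_measurable_upd_alpha:
  fixes X Y1 Y2 :: "'w \<Rightarrow> real^'n"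
  assumes [measurable]: "J \<in> borel_measurable borel"
    "X \<in> borel_measurable L" "Y1 \<in> borel_measurable L" "Y2 \<in> borel_measurable L"
  shows "(\<lambda>\<omega>. upd eps (alpha J eps lam rho N k (X \<omega>) (Y1 \<omega>)) (alpha J eps lam rho N k (X \<omega>) (Y2 \<omega>))
            (X \<omega>) (Y1 \<omega>) (Y2 \<omega>)) \<in> borel_measurable L"
  unfolding upd_def alpha_def by measurable

section \<open>Conditionally unbiased noise\<close>

context
  fixes M F :: "'w measure" and g m :: "'w \<Rightarrow> real^'n" and G :: "real^'n^'n"
  assumes subalg: "sigma_finite_subalgebra M F" and prob: "prob_space M"
    and g_sq: "\<And>j. square_integrable M (\<lambda>\<omega>. g \<omega> $ j)"
    and m_sq: "\<And>j. square_integrable M (\<lambda>\<omega>. m \<omega> $ j)"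
    and m_F: "\<And>j. (\<lambda>\<omega>. m \<omega> $ j) \<in> borel_measurable F"
    and cond_mean: "\<And>j. AE \<omega> in M. real_cond_exp M F (\<lambda>\<omega>. g \<omega> $ j) \<omega> = m \<omega> $ j"
    and cond_cov: "\<And>i j. AE \<omega> in M. real_cond_exp M F
        (\<lambda>\<omega>. (g \<omega> $ i - m \<omega> $ i) * (g \<omega> $ j - m \<omega> $ j)) \<omega> = G $ i $ j"
begin

lemma noise_square_integrable: "square_integrable M (\<lambda>\<omega>. (g \<omega> - m \<omega>) $ j)"
  using square_integrable_diff[OF g_sq m_sq] by simp

lemma integral_noise_orthogonal:
  assumes X_F: "X \<in> borel_measurable F" and X_sq: "square_integrable M X"
  shows "(\<integral>\<omega>. X \<omega> * (g \<omega> - m \<omega>) $ j \<partial>M) = 0"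
proof -
  interpret sigma_finite_subalgebra M F by (rule subalg)
  have "(\<integral>\<omega>. X \<omega> * g \<omega> $ j \<partial>M) = (\<integral>\<omega>. X \<omega> * real_cond_exp M F (\<lambda>\<omega>. g \<omega> $ j) \<omega> \<partial>M)"
    using real_cond_exp_intg(2)[OF integrable_mult_square_integrable[OF X_sq g_sq] X_F
        square_integrable_borel_measurable[OF g_sq]] by simp
  also have "\<dots> = (\<integral>\<omega>. X \<omega> * m \<omega> $ j \<partial>M)"
    using cond_mean[of j] X_F m_F
    by (intro integral_cong_AE) (auto intro!: measurable_from_subalg[OF subalg])
  finally show ?thesis
    using integrable_mult_square_integrable[OF X_sq g_sq] integrable_mult_square_integrable[OF X_sq m_sq]
    by (simp add: right_diff_distrib)
qed

lemma integral_noise_covariance: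
  "(\<integral>\<omega>. (g \<omega> - m \<omega>) $ i * (g \<omega> - m \<omega>) $ j \<partial>M) = G $ i $ j"
proof -
  interpret sigma_finite_subalgebra M F by (rule subalg)
  interpret prob_space M by (rule prob)
  have "(\<integral>\<omega>. (g \<omega> - m \<omega>) $ i * (g \<omega> - m \<omega>) $ j \<partial>M)
      = (\<integral>\<omega>. real_cond_exp M F (\<lambda>\<omega>. (g \<omega> $ i - m \<omega> $ i) * (g \<omega> $ j - m \<omega> $ j)) \<omega> \<partial>M)"
    using real_cond_exp_int(2)[OF integrable_mult_square_integrable[OF noise_square_integrable
          noise_square_integrable]] by simp
  also have "\<dots> = G $ i $ j"
    using cond_cov[of i j] by (simp add: integral_cong_AE[where g = "\<lambda>_. G $ i $ j"] prob_space)
  finally show ?thesis .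
qed

lemma integral_quad_form_plus_noise:
  fixes Y :: "'w \<Rightarrow> real^'n" and P :: "real^'n^'n"
  assumes Y_sq: "\<And>j. square_integrable M (\<lambda>\<omega>. Y \<omega> $ j)"
    and Y_F: "\<And>j. (\<lambda>\<omega>. Y \<omega> $ j) \<in> borel_measurable F"
  shows "integrable M (\<lambda>\<omega>. quad_form P (Y \<omega> + c *\<^sub>R (g \<omega> - m \<omega>)))"
    and "(\<integral>\<omega>. quad_form P (Y \<omega> + c *\<^sub>R (g \<omega> - m \<omega>)) \<partial>M)
           = (\<integral>\<omega>. quad_form P (Y \<omega>) \<partial>M) + c\<^sup>2 * (\<Sum>i\<in>UNIV. \<Sum>j\<in>UNIV. P$i$j * G$i$j)"
proof -
  define \<xi> where "\<xi> \<omega> = g \<omega> - m \<omega>" for \<omega>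
  have \<xi>_sq: "square_integrable M (\<lambda>\<omega>. \<xi> \<omega> $ j)" for j
    unfolding \<xi>_def by (rule noise_square_integrable)
  define summand where "summand i j \<omega> = P$i$j * (Y \<omega> $ i * Y \<omega> $ j + c * (Y \<omega> $ i * \<xi> \<omega> $ j)
      + c * (Y \<omega> $ j * \<xi> \<omega> $ i) + c\<^sup>2 * (\<xi> \<omega> $ i * \<xi> \<omega> $ j))" for i j \<omega>
  have quad_eq: "quad_form P (Y \<omega> + c *\<^sub>R \<xi> \<omega>) = (\<Sum>i\<in>UNIV. \<Sum>j\<in>UNIV. summand i j \<omega>)" for \<omega>
    unfolding quad_form_eq_sum summand_def by (intro sum.cong refl) (simp add: algebra_simps power2_eq_square)
  have summand_int: "integrable M (summand i j)" for i j
    unfolding summand_def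
    using integrable_mult_square_integrable[OF Y_sq Y_sq] integrable_mult_square_integrable[OF Y_sq \<xi>_sq]
      integrable_mult_square_integrable[OF \<xi>_sq \<xi>_sq]
    by simp
  have "(\<integral>\<omega>. summand i j \<omega> \<partial>M) = P$i$j * (\<integral>\<omega>. Y \<omega> $ i * Y \<omega> $ j \<partial>M) + c\<^sup>2 * (P$i$j * G$i$j)" for i j
  proof -
    have "(\<integral>\<omega>. summand i j \<omega> \<partial>M) = P$i$j * ((\<integral>\<omega>. Y \<omega> $ i * Y \<omega> $ j \<partial>M)
        + c * (\<integral>\<omega>. Y \<omega> $ i * \<xi> \<omega> $ j \<partial>M) + c * (\<integral>\<omega>. Y \<omega> $ j * \<xi> \<omega> $ i \<partial>M)
        + c\<^sup>2 * (\<integral>\<omega>. \<xi> \<omega> $ i * \<xi> \<omega> $ j \<partial>M))"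
      unfolding summand_def
      using integrable_mult_square_integrable[OF Y_sq Y_sq] integrable_mult_square_integrable[OF Y_sq \<xi>_sq]
        integrable_mult_square_integrable[OF \<xi>_sq \<xi>_sq]
      by simp
    then show ?thesis
      using integral_noise_orthogonal[OF Y_F Y_sq, of i j, folded \<xi>_def]
        integral_noise_orthogonal[OF Y_F Y_sq, of j i, folded \<xi>_def]
        integral_noise_covariance[of i j, folded \<xi>_def]
      by (simp add: algebra_simps)
  qed
  then show "integrable M (\<lambda>\<omega>. quad_form P (Y \<omega> + c *\<^sub>R (g \<omega> - m \<omega>)))"
    and "(\<integral>\<omega>. quad_form P (Y \<omega> + c *\<^sub>R (g \<omega> - m \<omega>)) \<partial>M)
           = (\<integral>\<omega>. quad_form P (Y \<omega>) \<partial>M) + c\<^sup>2 * (\<Sum>i\<in>UNIV. \<Sum>j\<in>UNIV. P$i$j * G$i$j)"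
    using summand_int integrable_mult_square_integrable[OF Y_sq Y_sq]
    unfolding \<xi>_def[symmetric] quad_eq
    by (simp_all add: quad_form_eq_sum sum.distrib sum_distrib_left)
qed

end

section \<open>Expected cost of the event-triggered scheme\<close>

lemma trace_symmetric_mult:
  fixes P G :: "real^'n^'n"
  assumes "transpose P = P"
  shows "trace (P ** G) = (\<Sum>i\<in>UNIV. \<Sum>j\<in>UNIV. P$i$j * G$i$j)"
proof -
  have P_sym: "P $ j $ i = P $ i $ j" for i j
    using arg_cong[OF assms, of "\<lambda>A. A $ i $ j"] by (simp add: transpose_def)
  have "trace (P ** G) = (\<Sum>i\<in>UNIV. \<Sum>j\<in>UNIV. P$i$j * G$j$i)"
    by (simp add: trace_def matrix_matrix_mult_def)
  also have "\<dots> = (\<Sum>j\<in>UNIV. \<Sum>i\<in>UNIV. P$i$j * G$j$i)"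
    by (rule sum.swap)
  finally show ?thesis
    by (simp add: P_sym)
qed

lemma sum_reversed_geometric:
  fixes x :: real
  assumes "x \<noteq> 1"
  shows "(\<Sum>k<N. x ^ (N - 1 - k)) = (1 - x ^ N) / (1 - x)"
proof -
  have "(\<Sum>k<N. x ^ (N - 1 - k)) = (\<Sum>k<N. x ^ k)"
    using sum.atLeastLessThan_rev[of "\<lambda>k. x ^ k" 0 N] by (simp add: lessThan_atLeast0)
  then show ?thesis
    using assms by (simp add: sum_gp_strict)
qed

locale event_triggered_sgd =
  fixes J :: "real^'n \<Rightarrow> real" and P G :: "real^'n^'n" and ws w0 :: "real^'n"
    and eps rho lam :: real and N :: nat
    and M :: "'w measure" and F :: "nat \<Rightarrow> 'w measure"
    and g1 g2 W :: "nat \<Rightarrow> 'w \<Rightarrow> real^'n"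
  assumes J_eq: "\<And>v. J v = J ws + quad_form P (v - ws)"
    and J_nonneg: "\<And>v. 0 \<le> J v"
    and P_symmetric: "transpose P = P"
    and P_psd: "\<And>x. 0 \<le> quad_form P x"
    and gradient_step_contracts: "\<And>x. quad_form P (x - (2 * eps) *\<^sub>R (P *v x)) \<le> rho * quad_form P x"
    and rho: "0 < rho" "rho < 1" and lam: "0 \<le> lam" and N: "1 \<le> N"
    and M: "prob_space M"
    and F_sub: "\<forall>k. sigma_finite_subalgebra M (F k)"
    and F_mono: "\<forall>k. sets (F k) \<subseteq> sets (F (Suc k))"
    and g_meas: "\<forall>k. g1 k \<in> borel_measurable (F (Suc k)) \<and> g2 k \<in> borel_measurable (F (Suc k))"
    and g_L2: "\<forall>k<N. \<forall>j. integrable M (\<lambda>\<omega>. (g1 k \<omega> $ j)\<^sup>2) \<and> integrable M (\<lambda>\<omega>. (g2 k \<omega> $ j)\<^sup>2)"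
    and g_mean: "\<forall>k<N. \<forall>j.
        (AE \<omega> in M. real_cond_exp M (F k) (\<lambda>\<omega>. g1 k \<omega> $ j) \<omega> = grad J (W k \<omega>) $ j) \<and>
        (AE \<omega> in M. real_cond_exp M (F k) (\<lambda>\<omega>. g2 k \<omega> $ j) \<omega> = grad J (W k \<omega>) $ j)"
    and g_cov: "\<forall>k<N. \<forall>i j.
        (AE \<omega> in M. real_cond_exp M (F k)
            (\<lambda>\<omega>. (g1 k \<omega> $ i - grad J (W k \<omega>) $ i) * (g1 k \<omega> $ j - grad J (W k \<omega>) $ j)) \<omega> = G $ i $ j) \<and>
        (AE \<omega> in M. real_cond_exp M (F k)
            (\<lambda>\<omega>. (g2 k \<omega> $ i - grad J (W k \<omega>) $ i) * (g2 k \<omega> $ j - grad J (W k \<omega>) $ j)) \<omega> = G $ i $ j)"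
    and W_def: "W = (\<lambda>k \<omega>. traj J eps lam rho N w0 (\<lambda>i. g1 i \<omega>) (\<lambda>i. g2 i \<omega>) k)"
begin

lemma F_subalgebra: "sigma_finite_subalgebra M (F k)"
  using F_sub by blast

lemma g_measurable: "g \<in> {g1, g2} \<Longrightarrow> g k \<in> borel_measurable (F (Suc k))"
  using g_meas by auto

lemma grad_J: "grad J v = 2 *\<^sub>R (P *v (v - ws))"
  by (rule grad_min_plus_quad_form[OF P_symmetric J_eq])

lemma agent_cond_mean:
  "g \<in> {g1, g2} \<Longrightarrow> k < N \<Longrightarrow>
    AE \<omega> in M. real_cond_exp M (F k) (\<lambda>\<omega>. g k \<omega> $ j) \<omega> = (2 *\<^sub>R (P *v (W k \<omega> - ws))) $ j"
  using g_mean by (auto simp: grad_J)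

lemma agent_cond_cov:
  "g \<in> {g1, g2} \<Longrightarrow> k < N \<Longrightarrow>
    AE \<omega> in M. real_cond_exp M (F k) (\<lambda>\<omega>. (g k \<omega> $ i - (2 *\<^sub>R (P *v (W k \<omega> - ws))) $ i)
      * (g k \<omega> $ j - (2 *\<^sub>R (P *v (W k \<omega> - ws))) $ j)) \<omega> = G $ i $ j"
  using g_cov by (auto simp: grad_J)

lemma W_0: "W 0 \<omega> = w0"
  by (simp add: W_def)

lemma W_Suc: "W (Suc k) \<omega> = upd eps (alpha J eps lam rho N k (W k \<omega>) (g1 k \<omega>))
    (alpha J eps lam rho N k (W k \<omega>) (g2 k \<omega>)) (W k \<omega>) (g1 k \<omega>) (g2 k \<omega>)"
  by (simp add: W_def Let_def)

lemma J_midpoint_convex: "J ((1/2) *\<^sub>R (u + v)) \<le> (J u + J v) / 2"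
proof -
  have "(1/2) *\<^sub>R (u + v) - ws = (1/2) *\<^sub>R ((u - ws) + (v - ws))"
    by (simp add: vec_eq_iff field_simps)
  then have "J ((1/2) *\<^sub>R (u + v)) = J ws + quad_form P ((1/2) *\<^sub>R ((u - ws) + (v - ws)))"
    unfolding J_eq[of "(1/2) *\<^sub>R (u + v)"] by (simp only:)
  also have "\<dots> \<le> J ws + (quad_form P (u - ws) + quad_form P (v - ws)) / 2"
    using quad_form_midpoint_le[OF P_symmetric P_psd, of "u - ws" "v - ws"] by linarith
  also have "\<dots> = (J u + J v) / 2"
    unfolding J_eq[of u] J_eq[of v] by (simp add: field_simps)
  finally show ?thesis .
qed

lemma J_borel_measurable: "J \<in> borel_measurable borel"
proof -
  have "J v = J ws + (\<Sum>i\<in>UNIV. \<Sum>j\<in>UNIV. P$i$j * ((v$i - ws$i) * (v$j - ws$j)))" for v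
    using J_eq[of v] by (simp only: quad_form_eq_sum vector_minus_component)
  then have "J = (\<lambda>v. J ws + (\<Sum>i\<in>UNIV. \<Sum>j\<in>UNIV. P$i$j * ((v$i - ws$i) * (v$j - ws$j))))"
    by (rule ext)
  also have "\<dots> \<in> borel_measurable borel"
    by measurable
  finally show ?thesis .
qed

lemma W_adapted: "W k \<in> borel_measurable (F k)"
proof (induction k)
  case 0
  then show ?case by (simp add: W_0)
next
  case (Suc k)
  have "subalgebra (F (Suc k)) (F k)"
    using F_subalgebra[of k] F_subalgebra[of "Suc k"] F_mono
    by (simp add: subalgebra_def sigma_finite_subalgebra_def)
  then have "W k \<in> borel_measurable (F (Suc k))"
    using Suc.IH by (rule measurable_from_subalg)
  then show ?case
    unfolding W_Suc[abs_def]
    by (rule borel_measurable_upd_alpha[OF J_borel_measurable _ g_measurable g_measurable]) simp_all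
qed

lemma W_borel_measurable: "W k \<in> borel_measurable M"
  by (rule measurable_from_subalg[OF _ W_adapted]) (rule sigma_finite_subalgebra.subalg[OF F_subalgebra])

lemma g_square_integrable:
  assumes "g \<in> {g1, g2}" "k < N"
  shows "square_integrable M (\<lambda>\<omega>. g k \<omega> $ j)"
proof -
  have "g k \<in> borel_measurable M"
    using F_subalgebra[of "Suc k"] g_measurable[OF assms(1)]
    by (meson measurable_from_subalg sigma_finite_subalgebra.subalg)
  then show ?thesis
    using g_L2 assms measurable_compose[OF _ borel_measurable_nth]
    by (auto simp: square_integrable_def)
qed

lemma W_square_integrable: "k \<le> N \<Longrightarrow> square_integrable M (\<lambda>\<omega>. W k \<omega> $ i)"
proof (induction k)
  case 0
  then show ?case
    using M by (simp add: W_0 square_integrable_const prob_space.finite_measure)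
next
  case (Suc k)
  then have "k < N" by simp
  show ?case
  proof (rule square_integrable_bound)
    show "square_integrable M (\<lambda>\<omega>. \<bar>W k \<omega> $ i\<bar> + \<bar>eps\<bar> * (\<bar>g1 k \<omega> $ i\<bar> + \<bar>g2 k \<omega> $ i\<bar>))"
      using Suc.IH \<open>k < N\<close> g_square_integrable[of g1 k i] g_square_integrable[of g2 k i]
      by (simp add: square_integrable_add square_integrable_cmult square_integrable_abs)
    show "(\<lambda>\<omega>. W (Suc k) \<omega> $ i) \<in> borel_measurable M"
      using measurable_compose[OF W_borel_measurable borel_measurable_nth] .
  qed (simp add: W_Suc abs_upd_component_le)
qed

lemma centered_W_component:
  assumes "k \<le> N"
  shows "square_integrable M (\<lambda>\<omega>. (A *v (W k \<omega> - ws)) $ j)"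
    and "(\<lambda>\<omega>. (A *v (W k \<omega> - ws)) $ j) \<in> borel_measurable (F k)"
proof -
  have comp: "(A *v (W k \<omega> - ws)) $ j = (\<Sum>l\<in>UNIV. A$j$l * (W k \<omega> $ l - ws $ l))" for \<omega>
    by (simp add: matrix_vector_mult_def)
  have [measurable]: "(\<lambda>\<omega>. W k \<omega> $ l) \<in> borel_measurable (F k)" for l
    using measurable_compose[OF W_adapted borel_measurable_nth] .
  show "square_integrable M (\<lambda>\<omega>. (A *v (W k \<omega> - ws)) $ j)"
    unfolding comp using assms prob_space.finite_measure[OF M]
    by (intro square_integrable_sum square_integrable_cmult square_integrable_diff W_square_integrable
        square_integrable_const)
  show "(\<lambda>\<omega>. (A *v (W k \<omega> - ws)) $ j) \<in> borel_measurable (F k)"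
    unfolding comp by measurable
qed

lemma expected_gradient_step:
  assumes g: "g \<in> {g1, g2}" and k: "k < N"
  shows "integrable M (\<lambda>\<omega>. J (W k \<omega> - eps *\<^sub>R g k \<omega>))"
    and "(\<integral>\<omega>. J (W k \<omega> - eps *\<^sub>R g k \<omega>) \<partial>M)
           \<le> J ws + rho * (\<integral>\<omega>. quad_form P (W k \<omega> - ws) \<partial>M) + eps\<^sup>2 * trace (P ** G)"
proof -
  define D where "D \<omega> = W k \<omega> - ws" for \<omega>
  define m where "m \<omega> = 2 *\<^sub>R (P *v D \<omega>)" for \<omega>
  define Y where "Y \<omega> = D \<omega> - (2 * eps) *\<^sub>R (P *v D \<omega>)" for \<omega>
  note centered = centered_W_component[OF less_imp_le[OF k]]
  have D_sq: "square_integrable M (\<lambda>\<omega>. D \<omega> $ j)" for j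
    using centered(1)[of "mat 1"] by (simp add: D_def)
  have "m \<omega> = (2 *\<^sub>R P) *v (W k \<omega> - ws)" "Y \<omega> = (mat 1 - (2 * eps) *\<^sub>R P) *v (W k \<omega> - ws)" for \<omega>
    by (simp_all add: D_def m_def Y_def scaleR_matrix_vector_assoc matrix_vector_mult_diff_rdistrib)
  then have m_sq: "\<And>j. square_integrable M (\<lambda>\<omega>. m \<omega> $ j)"
    and m_F: "\<And>j. (\<lambda>\<omega>. m \<omega> $ j) \<in> borel_measurable (F k)"
    and Y_sq: "\<And>j. square_integrable M (\<lambda>\<omega>. Y \<omega> $ j)"
    and Y_F: "\<And>j. (\<lambda>\<omega>. Y \<omega> $ j) \<in> borel_measurable (F k)"
    using centered by simp_all
  have noise:
    "integrable M (\<lambda>\<omega>. quad_form P (Y \<omega> + (- eps) *\<^sub>R (g k \<omega> - m \<omega>)))"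
    "(\<integral>\<omega>. quad_form P (Y \<omega> + (- eps) *\<^sub>R (g k \<omega> - m \<omega>)) \<partial>M)
       = (\<integral>\<omega>. quad_form P (Y \<omega>) \<partial>M) + eps\<^sup>2 * trace (P ** G)"
    using integral_quad_form_plus_noise[OF F_subalgebra M g_square_integrable[OF g k] m_sq m_F
        agent_cond_mean[OF g k, folded D_def m_def] agent_cond_cov[OF g k, folded D_def m_def] Y_sq Y_F,
        of P "- eps"]
    by (simp_all add: trace_symmetric_mult[OF P_symmetric])
  have J_step: "J (W k \<omega> - eps *\<^sub>R g k \<omega>) = J ws + quad_form P (Y \<omega> + (- eps) *\<^sub>R (g k \<omega> - m \<omega>))"
    for \<omega>
    unfolding J_eq[of "W k \<omega> - eps *\<^sub>R g k \<omega>"] Y_def m_def D_def by (simp add: algebra_simps)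
  have "quad_form P (Y \<omega>) \<le> rho * quad_form P (D \<omega>)" for \<omega>
    unfolding Y_def by (rule gradient_step_contracts)
  then have "(\<integral>\<omega>. quad_form P (Y \<omega>) \<partial>M) \<le> (\<integral>\<omega>. rho * quad_form P (D \<omega>) \<partial>M)"
    using integrable_quad_form[OF Y_sq] integrable_quad_form[OF D_sq]
    by (intro integral_mono) auto
  with noise show "integrable M (\<lambda>\<omega>. J (W k \<omega> - eps *\<^sub>R g k \<omega>))"
    and "(\<integral>\<omega>. J (W k \<omega> - eps *\<^sub>R g k \<omega>) \<partial>M)
           \<le> J ws + rho * (\<integral>\<omega>. quad_form P (W k \<omega> - ws) \<partial>M) + eps\<^sup>2 * trace (P ** G)"
    using prob_space.finite_measure[OF M] prob_space.prob_space[OF M] unfolding J_step D_def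
    by (simp_all add: finite_measure.integrable_const)
qed

lemma step_cost_le:
  assumes "k < N"
  shows "rho ^ (N - 1 - k) * J (W (Suc k) \<omega>)
      + lam * ((alpha J eps lam rho N k (W k \<omega>) (g1 k \<omega>) + alpha J eps lam rho N k (W k \<omega>) (g2 k \<omega>)) / (2 * real N))
    \<le> rho ^ (N - 1 - k) * ((J (W k \<omega> - eps *\<^sub>R g1 k \<omega>) + J (W k \<omega> - eps *\<^sub>R g2 k \<omega>)) / 2) + lam / real N"
proof -
  define c where "c = rho ^ (N - 1 - k)"
  define T where "T = lam / (c * real N)"
  have "c > 0" "real N > 0"
    using rho N unfolding c_def by simp_all
  then have "T \<ge> 0" and cT: "c * (T * x) = lam * (x / real N)" for x
    using lam unfolding T_def by simp_all
  have "J (W (Suc k) \<omega>)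
      + T * ((alpha J eps lam rho N k (W k \<omega>) (g1 k \<omega>) + alpha J eps lam rho N k (W k \<omega>) (g2 k \<omega>)) / 2)
    \<le> (J (W k \<omega> - eps *\<^sub>R g1 k \<omega>) + J (W k \<omega> - eps *\<^sub>R g2 k \<omega>)) / 2 + T"
    unfolding W_Suc
    by (rule upd_event_triggered_le[OF J_midpoint_convex \<open>T \<ge> 0\<close>]) (simp_all add: alpha_def T_def c_def)
  from mult_left_mono[OF this less_imp_le[OF \<open>c > 0\<close>]] show ?thesis
    unfolding c_def[symmetric] distrib_left cT[of 1, simplified] cT by (simp add: field_simps)
qed

definition step_excess :: "nat \<Rightarrow> 'w \<Rightarrow> real" where
  "step_excess k \<omega> = (J (W k \<omega> - eps *\<^sub>R g1 k \<omega>) + J (W k \<omega> - eps *\<^sub>R g2 k \<omega>)) / 2 - J ws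
     - rho * (J (W k \<omega>) - J ws)"

text \<open>Telescoping the potential \<open>rho ^ (N - k) * (J (W k) - J ws)\<close> plus the communication cost so far.\<close>
lemma pathwise_cost_le:
  "lam * (\<Sum>k<N. (alpha J eps lam rho N k (W k \<omega>) (g1 k \<omega>) + alpha J eps lam rho N k (W k \<omega>) (g2 k \<omega>))
        / (2 * real N)) + J (W N \<omega>)
   \<le> lam + J ws + rho ^ N * (J w0 - J ws) + (\<Sum>k<N. rho ^ (N - 1 - k) * step_excess k \<omega>)"
proof -
  define a where "a k = (alpha J eps lam rho N k (W k \<omega>) (g1 k \<omega>) + alpha J eps lam rho N k (W k \<omega>) (g2 k \<omega>))
    / (2 * real N)" for k
  define \<Psi> where "\<Psi> k = rho ^ (N - k) * (J (W k \<omega>) - J ws) + lam * (\<Sum>j<k. a j)" for k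
  have "\<Psi> (Suc k) - \<Psi> k \<le> rho ^ (N - 1 - k) * step_excess k \<omega> + lam / real N" if "k < N" for k
  proof -
    have "rho ^ (N - k) = rho * rho ^ (N - 1 - k)"
      using that by (simp flip: power_Suc add: Suc_diff_Suc)
    then show ?thesis
      using step_cost_le[OF that, of \<omega>] unfolding \<Psi>_def a_def step_excess_def
      by (simp add: algebra_simps)
  qed
  then have "\<Psi> N - \<Psi> 0 \<le> (\<Sum>k<N. rho ^ (N - 1 - k) * step_excess k \<omega> + lam / real N)"
    unfolding sum_lessThan_telescope[symmetric] by (intro sum_mono) simp
  also have "\<dots> = (\<Sum>k<N. rho ^ (N - 1 - k) * step_excess k \<omega>) + lam"
    using N by (simp add: sum.distrib)
  finally show ?thesis
    unfolding \<Psi>_def a_def by (simp add: W_0 algebra_simps)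
qed

lemma expected_step_excess_le:
  assumes k: "k < N"
  shows "integrable M (step_excess k)" and "(\<integral>\<omega>. step_excess k \<omega> \<partial>M) \<le> eps\<^sup>2 * trace (P ** G)"
proof -
  interpret prob_space M by (rule M)
  have "square_integrable M (\<lambda>\<omega>. (W k \<omega> - ws) $ j)" for j
    using square_integrable_diff[OF W_square_integrable square_integrable_const] k by simp
  then have Q: "integrable M (\<lambda>\<omega>. quad_form P (W k \<omega> - ws))"
    by (rule integrable_quad_form)
  have excess_eq: "step_excess k = (\<lambda>\<omega>. J (W k \<omega> - eps *\<^sub>R g1 k \<omega>) / 2 + J (W k \<omega> - eps *\<^sub>R g2 k \<omega>) / 2
      - J ws - rho * quad_form P (W k \<omega> - ws))"
    by (simp add: fun_eq_iff step_excess_def J_eq[of "W k _"])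
  note step1 = expected_gradient_step[of g1 k] and step2 = expected_gradient_step[of g2 k]
  show "integrable M (step_excess k)"
    unfolding excess_eq using step1(1) step2(1) Q k by simp
  show "(\<integral>\<omega>. step_excess k \<omega> \<partial>M) \<le> eps\<^sup>2 * trace (P ** G)"
    unfolding excess_eq using step1 step2 Q k by (simp add: prob_space field_simps)
qed

theorem expected_cost_le:
  "(\<integral>\<^sup>+ \<omega>. ennreal (lam * (\<Sum>k<N. (alpha J eps lam rho N k (W k \<omega>) (g1 k \<omega>)
        + alpha J eps lam rho N k (W k \<omega>) (g2 k \<omega>)) / (2 * real N)) + J (W N \<omega>)) \<partial>M)
   \<le> ennreal (lam + J ws + rho ^ N * (J w0 - J ws) + (1 - rho ^ N) / (1 - rho) * eps\<^sup>2 * trace (P ** G))"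
  (is "(\<integral>\<^sup>+ \<omega>. ennreal (?cost \<omega>) \<partial>M) \<le> _")
proof -
  interpret prob_space M by (rule M)
  define U where "U \<omega> = lam + J ws + rho ^ N * (J w0 - J ws) + (\<Sum>k<N. rho ^ (N - 1 - k) * step_excess k \<omega>)"
    for \<omega>
  have cost_le_U: "?cost \<omega> \<le> U \<omega>" for \<omega>
    unfolding U_def by (rule pathwise_cost_le)
  have "0 \<le> ?cost \<omega>" for \<omega>
    using lam J_nonneg by (simp add: alpha_nonneg sum_nonneg)
  then have U_nonneg: "0 \<le> U \<omega>" for \<omega>
    using cost_le_U order_trans by blast
  have sum_int: "integrable M (\<lambda>\<omega>. \<Sum>k<N. rho ^ (N - 1 - k) * step_excess k \<omega>)"
    using expected_step_excess_le(1) by (intro Bochner_Integration.integrable_sum integrable_mult_right) auto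
  then have U_int: "integrable M U"
    unfolding U_def by simp
  have "(\<integral>\<^sup>+ \<omega>. ennreal (?cost \<omega>) \<partial>M) \<le> (\<integral>\<^sup>+ \<omega>. ennreal (U \<omega>) \<partial>M)"
    by (intro nn_integral_mono ennreal_leI cost_le_U)
  also have "\<dots> = ennreal (\<integral>\<omega>. U \<omega> \<partial>M)"
    using U_int U_nonneg by (simp add: nn_integral_eq_integral)
  also have "(\<integral>\<omega>. U \<omega> \<partial>M)
      = lam + J ws + rho ^ N * (J w0 - J ws) + (\<Sum>k<N. rho ^ (N - 1 - k) * (\<integral>\<omega>. step_excess k \<omega> \<partial>M))"
    unfolding U_def using sum_int expected_step_excess_le(1)
    by (simp add: prob_space Bochner_Integration.integral_sum)
  also have "\<dots> \<le> lam + J ws + rho ^ N * (J w0 - J ws) + (\<Sum>k<N. rho ^ (N - 1 - k) * (eps\<^sup>2 * trace (P ** G)))"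
    using expected_step_excess_le(2) rho by (intro add_left_mono sum_mono mult_left_mono) auto
  also have "\<dots> = lam + J ws + rho ^ N * (J w0 - J ws) + (1 - rho ^ N) / (1 - rho) * eps\<^sup>2 * trace (P ** G)"
    using rho sum_reversed_geometric[of rho N] by (simp add: sum_distrib_right[symmetric])
  finally show ?thesis
    by (simp add: ennreal_leI)
qed

end

theorem theorem1:
  fixes d :: "'x measure" and V :: "'x \<Rightarrow> real" and phi :: "'x \<Rightarrow> real^'n"
    and eps rho lam :: real and N :: nat and w0 wstar :: "real^'n" and G :: "real^'n^'n"
    and M :: "'w measure" and F :: "nat \<Rightarrow> 'w measure"
    and g1 g2 :: "nat \<Rightarrow> 'w \<Rightarrow> real^'n"
  defines "J \<equiv> Jobj d V phi"
    and "\<Phi> \<equiv> Phi_mat d phi"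
    and "w \<equiv> (\<lambda>k \<omega>. traj (Jobj d V phi) eps lam rho N w0 (\<lambda>i. g1 i \<omega>) (\<lambda>i. g2 i \<omega>) k)"
    and "a1 \<equiv> (\<lambda>k \<omega>. alpha (Jobj d V phi) eps lam rho N k (traj (Jobj d V phi) eps lam rho N w0 (\<lambda>i. g1 i \<omega>) (\<lambda>i. g2 i \<omega>) k) (g1 k \<omega>))"
    and "a2 \<equiv> (\<lambda>k \<omega>. alpha (Jobj d V phi) eps lam rho N k (traj (Jobj d V phi) eps lam rho N w0 (\<lambda>i. g1 i \<omega>) (\<lambda>i. g2 i \<omega>) k) (g2 k \<omega>))"
  assumes d: "prob_space d"
    and phi_meas: "phi \<in> borel_measurable d" and V_meas: "V \<in> borel_measurable d"
    and phi_L2: "integrable d (\<lambda>x. (norm (phi x))^2)"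
    and V_L2: "integrable d (\<lambda>x. (V x)^2)"
    and pd: "pos_def \<Phi>"
    and wstar: "\<forall>v. J wstar \<le> J v"
    and eps: "eps > 0"
    and step: "\<forall>l. is_eigenvalue \<Phi> l \<longrightarrow> \<bar>1 - 2 * eps * l\<bar> < 1"
    and rho: "0 < rho" "rho < 1"
    and rho_ge: "\<forall>l. is_eigenvalue \<Phi> l \<longrightarrow> (1 - 2 * eps * l)^2 \<le> rho"
    and lam: "lam > 0" and N: "N \<ge> 1"
    and M: "prob_space M"
    and F_sub: "\<forall>k. sigma_finite_subalgebra M (F k)"
    and F_mono: "\<forall>k. sets (F k) \<subseteq> sets (F (Suc k))"
    and g_meas: "\<forall>k. g1 k \<in> borel_measurable (F (Suc k)) \<and> g2 k \<in> borel_measurable (F (Suc k))"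
    and g_L2: "\<forall>k<N. \<forall>j. integrable M (\<lambda>\<omega>. (g1 k \<omega> $ j)^2) \<and> integrable M (\<lambda>\<omega>. (g2 k \<omega> $ j)^2)"
    and g_mean: "\<forall>k<N. \<forall>j.
        (AE \<omega> in M. real_cond_exp M (F k) (\<lambda>\<omega>. g1 k \<omega> $ j) \<omega> = grad J (w k \<omega>) $ j) \<and>
        (AE \<omega> in M. real_cond_exp M (F k) (\<lambda>\<omega>. g2 k \<omega> $ j) \<omega> = grad J (w k \<omega>) $ j)"
    and g_cov: "\<forall>k<N. \<forall>i j.
        (AE \<omega> in M. real_cond_exp M (F k)
            (\<lambda>\<omega>. (g1 k \<omega> $ i - grad J (w k \<omega>) $ i) * (g1 k \<omega> $ j - grad J (w k \<omega>) $ j)) \<omega> = G $ i $ j) \<and>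
        (AE \<omega> in M. real_cond_exp M (F k)
            (\<lambda>\<omega>. (g2 k \<omega> $ i - grad J (w k \<omega>) $ i) * (g2 k \<omega> $ j - grad J (w k \<omega>) $ j)) \<omega> = G $ i $ j)"
    and g_cond_iid: "\<forall>k<N. \<forall>f h :: real^'n \<Rightarrow> real.
        f \<in> borel_measurable borel \<longrightarrow> h \<in> borel_measurable borel \<longrightarrow>
        bounded (range f) \<longrightarrow> bounded (range h) \<longrightarrow>
        (AE \<omega> in M. real_cond_exp M (F k) (\<lambda>\<omega>. f (g1 k \<omega>) * h (g2 k \<omega>)) \<omega> =
            real_cond_exp M (F k) (\<lambda>\<omega>. f (g1 k \<omega>)) \<omega> * real_cond_exp M (F k) (\<lambda>\<omega>. h (g2 k \<omega>)) \<omega>) \<and>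
        (AE \<omega> in M. real_cond_exp M (F k) (\<lambda>\<omega>. f (g1 k \<omega>)) \<omega> =
            real_cond_exp M (F k) (\<lambda>\<omega>. f (g2 k \<omega>)) \<omega>)"
  shows "(\<integral>\<^sup>+ \<omega>. ennreal (lam * (\<Sum>k<N. (a1 k \<omega> + a2 k \<omega>) / (2 * real N)) + J (w N \<omega>)) \<partial>M)
         \<le> ennreal (lam + J wstar + rho ^ N * (J w0 - J wstar)
                    + (1 - rho ^ N) / (1 - rho) * eps^2 * trace (\<Phi> ** G))"
proof -
  have P_sym: "transpose \<Phi> = \<Phi>"
    unfolding \<Phi>_def by (rule Phi_mat_symmetric)
  obtain c b where "\<And>v. J v = c - 2 * (b \<bullet> v) + quad_form \<Phi> v"
    using Jobj_eq_quadratic[OF phi_meas V_meas phi_L2 V_L2] unfolding J_def \<Phi>_def by blast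
  then have J_min: "J v = J wstar + quad_form \<Phi> (v - wstar)" for v
    by (rule quadratic_eq_min_plus_quad_form[where J = J and ws = wstar, OF P_sym _ wstar[rule_format]])
  have psd: "0 \<le> quad_form \<Phi> x" for x
    using pd unfolding pos_def_def quad_form_def by (cases "x = 0") (auto intro: less_imp_le)
  have "event_triggered_sgd J \<Phi> G wstar w0 eps rho lam N M F g1 g2 w"
    using J_min Jobj_nonneg[of d V phi, folded J_def] P_sym psd
      quad_form_gradient_step_le[OF P_sym psd rho_ge] rho less_imp_le[OF lam] N M F_sub F_mono
      g_meas g_L2 g_mean g_cov meta_eq_to_obj_eq[OF w_def[folded J_def]]
    by (rule event_triggered_sgd.intro)
  from event_triggered_sgd.expected_cost_le[OF this] show ?thesis
    unfolding a1_def a2_def w_def J_def .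
qed

end
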